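(* For all integers $n,f$ with $1\le f\le n-2$, $\mathrm{Cons}(n,f)$ is $C$-reducible to the wait-free Consensus task $\mathrm{Cons}(n,n-1)$, but $\mathrm{Cons}(n,n-1)$ is not $C$-reducible to $\mathrm{Cons}(n,f)$.
   Context: Model: a finite set of processes runs an asynchronous algorithm communicating by reliable message passing with unbounded delays and speeds; processes fail only by crashing. Time is $\mathcal T=\mathbb N$; a failure pattern $F$ for $\Pi$ is a nondecreasing map $\mathcal T\to2^\Pi$, $Faulty(F)=\bigcup_tF(t)$. A task $T=(P,f)$ consists of a binary agreement problem $P$ (mapping $(F,\vec V)$, $\vec V\in\{0,1\}^\Pi$, to a nonempty $P(F,\vec V)\subseteq\{0,1\}$) and a resiliency degree $f$. An algorithm solves $T$ if in every run with $|Faulty(F)|\le f$ and initial values $\vec V$: every correct process eventually decides, decisions are irrevocable, no two processes decide differently, and decisions lie in $P(F,\vec V)$. Binary Consensus $\mathrm{Cons}(n,f)=(\mathrm{Cons}_{\Pi},f)$ on $\Pi=\{1,\dots,n\}$: $\mathrm{Cons}_\Pi(F,\vec V)=\{v\}$ if all entries of $\vec V$ equal $v$, and $\{0,1\}$ otherwise. Oracles: for $T=(P,f)$ on $\Pi$, $\mathcal O.T$ is a black box with consultants $\Pi$; its history is a sequence of successive consultations, in each of which every consultant may submit at most one query in $\{0,1\}$ and the oracle returns a common response $d$ with $d\in P(F,\vec V)$ for every $\vec V$ extending the partial query vector (the oracle may use the whole failure pattern, including future crashes), and every correct querier gets the response whenever at least $|\Pi|-f$ consultants query; $\mathcal O.T$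 is the most general such oracle. $T_1\le_C T_2$ means there is an algorithm solving $T_1$ whose processes, besides message passing, may consult the oracle $\mathcal O.T_2$. *)

theory Defs
  imports Main
begin

text \<open>Processes are natural numbers; the process set of a task on n processes is
  Pi = {1..n}. Binary values {0,1} are rendered as bool (False = 0, True = 1).
  Time is nat.\<close>

type_synonym failure_pattern = "nat \<Rightarrow> nat set"

definition Faulty :: "failure_pattern \<Rightarrow> nat set" where
  "Faulty F = (\<Union>t. F t)"

definition failure_pattern_on :: "nat set \<Rightarrow> failure_pattern \<Rightarrow> bool" where
  "failure_pattern_on Pi F \<longleftrightarrow> mono F \<and> (\<forall>t. F t \<subseteq> Pi)"

definition Correct :: "nat set \<Rightarrow> failure_pattern \<Rightarrow> nat set" where
  "Correct Pi F = Pi - Faulty F"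

type_synonym agreement_problem = "failure_pattern \<Rightarrow> (nat \<Rightarrow> bool) \<Rightarrow> bool set"

text \<open>A task on the process set {1..n}: the problem and the resiliency degree.\<close>
record task =
  tprocs :: nat
  tproblem :: agreement_problem
  tres :: nat

definition ConsP :: "nat \<Rightarrow> agreement_problem" where
  "ConsP n F V =
     (if (\<forall>p\<in>{1..n}. V p) then {True}
      else if (\<forall>p\<in>{1..n}. \<not> V p) then {False}
      else UNIV)"

definition ConsTask :: "nat \<Rightarrow> nat \<Rightarrow> task" where
  "ConsTask n f = \<lparr>tprocs = n, tproblem = ConsP n, tres = f\<rparr>"

text \<open>What a process receives in a step: nothing, a message (sender, content),
  or a response (consultation index, value) from the oracle.\<close>
datatype 'm event = NoEvent | Receive nat 'm | Response nat bool

text \<open>A deterministic algorithm: initial state from process id and input value;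
  a step maps (process, state, received event) to (new state, messages sent as
  (destination, content) list, optional oracle query); the decision of a state.\<close>
record ('s, 'm) alg =
  init :: "nat \<Rightarrow> bool \<Rightarrow> 's"
  trans :: "nat \<Rightarrow> 's \<Rightarrow> 'm event \<Rightarrow> 's \<times> (nat \<times> 'm) list \<times> bool option"
  decision :: "'s \<Rightarrow> bool option"

text \<open>Local state of process p at (the beginning of) time t, given the inputs V,
  the schedule sc (which process, if any, takes a step at time t) and the events ev
  received in those steps.\<close>
primrec state :: "('s,'m) alg \<Rightarrow> (nat \<Rightarrow> bool) \<Rightarrow> (nat \<Rightarrow> nat option) \<Rightarrow> (nat \<Rightarrow> 'm event)
                  \<Rightarrow> nat \<Rightarrow> nat \<Rightarrow> 's" where
  "state A V sc ev 0 p = init A p (V p)"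
| "state A V sc ev (Suc t) p =
     (if sc t = Some p then fst (trans A p (state A V sc ev t p) (ev t))
      else state A V sc ev t p)"

definition step_output :: "('s,'m) alg \<Rightarrow> (nat \<Rightarrow> bool) \<Rightarrow> (nat \<Rightarrow> nat option) \<Rightarrow> (nat \<Rightarrow> 'm event)
                  \<Rightarrow> nat \<Rightarrow> (nat \<times> 'm) list \<times> bool option" where
  "step_output A V sc ev t =
     (case sc t of None \<Rightarrow> ([], None)
      | Some p \<Rightarrow> snd (trans A p (state A V sc ev t p) (ev t)))"

definition sent where "sent A V sc ev t = fst (step_output A V sc ev t)"
definition query where "query A V sc ev t = snd (step_output A V sc ev t)"

text \<open>Consultation index of a query issued by p at time t: the k-th query of a
  process (counting from 0) belongs to the k-th consultation.\<close>
definition qindex where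
  "qindex A V sc ev p t = card {s. s < t \<and> sc s = Some p \<and> query A V sc ev s \<noteq> None}"

definition queried_before where
  "queried_before A V sc ev k p v t \<longleftrightarrow>
     (\<exists>s<t. sc s = Some p \<and> query A V sc ev s = Some v \<and> qindex A V sc ev p s = k)"

definition queriers where
  "queriers A V sc ev k = {p. \<exists>s v. sc s = Some p \<and> query A V sc ev s = Some v \<and> qindex A V sc ev p s = k}"

text \<open>Admissible runs of algorithm A on processes {1..n} with access to the
  (most general) oracle O.T2 for T2 = (P2, f2) with consultants {1..n}.
  src t identifies the send event (time, position in the sent list) matched by a
  message reception at time t; ora k is the common response of consultation k.\<close>
definition is_run ::
  "nat \<Rightarrow> agreement_problem \<Rightarrow> nat \<Rightarrow> ('s,'m) alg \<Rightarrow> failure_pattern \<Rightarrow> (nat \<Rightarrow> bool)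
   \<Rightarrow> (nat \<Rightarrow> nat option) \<Rightarrow> (nat \<Rightarrow> 'm event) \<Rightarrow> (nat \<Rightarrow> nat \<times> nat) \<Rightarrow> (nat \<Rightarrow> bool) \<Rightarrow> bool"
where
  "is_run n P2 f2 A F V sc ev src ora \<longleftrightarrow>
     failure_pattern_on {1..n} F
   \<comment> \<open>only alive processes of Pi take steps\<close>
   \<and> (\<forall>t p. sc t = Some p \<longrightarrow> p \<in> {1..n} \<and> p \<notin> F t)
   \<comment> \<open>correct processes take infinitely many steps\<close>
   \<and> (\<forall>p\<in>Correct {1..n} F. \<forall>t. \<exists>t'\<ge>t. sc t' = Some p)
   \<comment> \<open>every received message was sent earlier to the receiver by the sender\<close>
   \<and> (\<forall>t p q m. sc t = Some p \<and> ev t = Receive q m \<longrightarrow>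
        fst (src t) < t \<and> sc (fst (src t)) = Some q
        \<and> snd (src t) < length (sent A V sc ev (fst (src t)))
        \<and> sent A V sc ev (fst (src t)) ! snd (src t) = (p, m))
   \<comment> \<open>no message is received twice\<close>
   \<and> (\<forall>t t' p p' q q' m m'. sc t = Some p \<and> ev t = Receive q m \<and> sc t' = Some p'
        \<and> ev t' = Receive q' m' \<and> src t = src t' \<longrightarrow> t = t')
   \<comment> \<open>reliable channels: every message sent to a correct process is received\<close>
   \<and> (\<forall>s i q p m. sc s = Some q \<and> i < length (sent A V sc ev s) \<and> sent A V sc ev s ! i = (p, m)
        \<and> p \<in> Correct {1..n} F \<longrightarrow>
        (\<exists>t. sc t = Some p \<and> ev t = Receive q m \<and> src t = (s, i)))
   \<comment> \<open>oracle responses: common value, only to queriers, valid for every input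
       vector extending the partial query vector of the consultation\<close>
   \<and> (\<forall>t p k d. sc t = Some p \<and> ev t = Response k d \<longrightarrow>
        d = ora k \<and> (\<exists>v. queried_before A V sc ev k p v t)
        \<and> (\<forall>V'. (\<forall>q v. queried_before A V sc ev k q v t \<longrightarrow> V' q = v) \<longrightarrow> d \<in> P2 F V'))
   \<comment> \<open>each querier receives the response of a consultation at most once\<close>
   \<and> (\<forall>t t' p k d d'. sc t = Some p \<and> sc t' = Some p \<and> ev t = Response k d
        \<and> ev t' = Response k d' \<longrightarrow> t = t')
   \<comment> \<open>oracle liveness: if at least n - f2 consultants query, every correct querier
       gets the response\<close>
   \<and> (\<forall>k. card (queriers A V sc ev k) \<ge> n - f2 \<longrightarrow>
        (\<forall>p \<in> queriers A V sc ev k \<inter> Correct {1..n} F.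
            \<exists>t. sc t = Some p \<and> ev t = Response k (ora k)))"

definition solves_with ::
  "('s,'m) alg \<Rightarrow> task \<Rightarrow> task \<Rightarrow> bool" where
  "solves_with A T1 T2 \<longleftrightarrow>
     (let n = tprocs T1 in
      \<forall>F V sc ev src ora.
        is_run n (tproblem T2) (tres T2) A F V sc ev src ora
        \<and> card (Faulty F) \<le> tres T1 \<longrightarrow>
        \<comment> \<open>termination\<close>
        (\<forall>p\<in>Correct {1..n} F. \<exists>t. decision A (state A V sc ev t p) \<noteq> None)
        \<comment> \<open>irrevocability\<close>
      \<and> (\<forall>p\<in>{1..n}. \<forall>t t' d. decision A (state A V sc ev t p) = Some d \<and> t \<le> t'
            \<longrightarrow> decision A (state A V sc ev t' p) = Some d)
        \<comment> \<open>agreement\<close>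
      \<and> (\<forall>p\<in>{1..n}. \<forall>q\<in>{1..n}. \<forall>t t' d d'.
            decision A (state A V sc ev t p) = Some d
            \<and> decision A (state A V sc ev t' q) = Some d' \<longrightarrow> d = d')
        \<comment> \<open>validity\<close>
      \<and> (\<forall>p\<in>{1..n}. \<forall>t d. decision A (state A V sc ev t p) = Some d
            \<longrightarrow> d \<in> tproblem T1 F V))"

definition C_reducible :: "'s itself \<Rightarrow> 'm itself \<Rightarrow> task \<Rightarrow> task \<Rightarrow> bool" where
  "C_reducible (_ :: 's itself) (_ :: 'm itself) T1 T2 \<longleftrightarrow>
     tprocs T1 = tprocs T2 \<and> (\<exists>A :: ('s,'m) alg. solves_with A T1 T2)"

end

theory Submission
  imports Defs "HOL-Library.Product_Lexorder"
begin

(* Reducibility: the oracle of wait-free consensus has to answer as soon as a single process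
   queries, so every process submits its input to the first consultation and decides the common
   answer. Since every correct process queries, this even works with the oracle of Cons(n, f')
   for any f' >= f.

   Irreducibility: for f <= n - 2 the oracle of Cons(n, f) never has to answer fewer than two
   queriers. Running alone with input 0 while all others have crashed, process 1 must decide 0 at
   some time T1 without any oracle answer; running alone from time T1 on with input 1, process 2
   decides 1 at some time T2. Glue the two solo runs: process 1 crashes at T1, and process 2
   receives neither its messages nor an oracle answer before T1 + T2. Each of the two processes
   cannot tell this run from its solo run, so they disagree, although only n - 1 processes crash. *)

section \<open>Runs\<close>

lemma state_cong:
  assumes "\<forall>s<t. E s = E' s"
  shows "state A V sc E t p = state A V sc E' t p"
  using assms by (induction t) auto

lemma step_output_cong:
  assumes "\<forall>s\<le>t. E s = E' s"
  shows "step_output A V sc E t = step_output A V sc E' t"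
  using assms state_cong[of t E E' A V sc] by (auto simp: step_output_def split: option.splits)

lemma sent_cong:
  assumes "\<forall>s\<le>t. E s = E' s"
  shows "sent A V sc E t = sent A V sc E' t"
  unfolding sent_def by (simp add: step_output_cong[OF assms])

lemma query_cong:
  assumes "\<forall>s\<le>t. E s = E' s"
  shows "query A V sc E t = query A V sc E' t"
  unfolding query_def by (simp add: step_output_cong[OF assms])

lemma qindex_cong:
  assumes "\<forall>s<t. E s = E' s"
  shows "qindex A V sc E p t = qindex A V sc E' p t"
proof -
  have "query A V sc E s = query A V sc E' s" if "s < t" for s
    using that assms by (intro query_cong) auto
  then show ?thesis
    unfolding qindex_def by (intro arg_cong[where f = card]) auto
qed

lemma sent_step:
  "sc s = Some p \<Longrightarrow> sent A V sc E s = fst (snd (trans A p (state A V sc E s p) (E s)))"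
  by (simp add: sent_def step_output_def)

lemma query_step:
  "sc s = Some p \<Longrightarrow> query A V sc E s = snd (snd (trans A p (state A V sc E s p) (E s)))"
  by (simp add: query_def step_output_def)

lemma qindex_less:
  assumes "sc s = Some p" "query A V sc E s \<noteq> None" "s < s'"
  shows "qindex A V sc E p s < qindex A V sc E p s'"
  unfolding qindex_def
proof (rule psubset_card_mono)
  show "finite {s. s < s' \<and> sc s = Some p \<and> query A V sc E s \<noteq> None}" by simp
  show "{s'. s' < s \<and> sc s' = Some p \<and> query A V sc E s' \<noteq> None}
      \<subset> {s. s < s' \<and> sc s = Some p \<and> query A V sc E s \<noteq> None}"
    using assms by auto
qed

lemma qindex_inj:
  assumes "sc s = Some p" "query A V sc E s \<noteq> None" "sc s' = Some p" "query A V sc E s' \<noteq> None"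
    and "qindex A V sc E p s = qindex A V sc E p s'"
  shows "s = s'"
  using qindex_less[of sc s p A V E s'] qindex_less[of sc s' p A V E s] assms
  by (metis less_irrefl nat_neq_iff)

lemma card_Correct:
  assumes "failure_pattern_on {1..n} F"
  shows "card (Correct {1..n} F) = n - card (Faulty F)"
proof -
  have "Faulty F \<subseteq> {1..n}"
    using assms unfolding failure_pattern_on_def Faulty_def by auto
  then show ?thesis
    unfolding Correct_def by (simp add: card_Diff_subset finite_subset)
qed

lemma ConsP_const: "n \<noteq> 0 \<Longrightarrow> ConsP n F (\<lambda>_. b) = {b}"
  unfolding ConsP_def by (cases b) auto

lemma ConsP_input: "p \<in> {1..n} \<Longrightarrow> V p = d \<Longrightarrow> d \<in> ConsP n F V"
  unfolding ConsP_def by auto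

lemma solves_with_ConsTaskD:
  assumes "solves_with A (ConsTask n f1) (ConsTask n f2)"
    and "is_run n (ConsP n) f2 A F V sc ev src ora" and "card (Faulty F) \<le> f1"
  shows "p \<in> Correct {1..n} F \<Longrightarrow> \<exists>t. decision A (state A V sc ev t p) \<noteq> None"
    and "\<lbrakk>p \<in> {1..n}; q \<in> {1..n}; decision A (state A V sc ev t p) = Some d;
          decision A (state A V sc ev t' q) = Some d'\<rbrakk> \<Longrightarrow> d = d'"
    and "\<lbrakk>p \<in> {1..n}; decision A (state A V sc ev t p) = Some d\<rbrakk> \<Longrightarrow> d \<in> ConsP n F V"
  using assms(1)[unfolded solves_with_def ConsTask_def Let_def task.simps, rule_format,
                 OF conjI[OF assms(2,3)]]
  by blast+

lemma is_run_failure_pattern: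
  "is_run n P f A F V sc ev src ora \<Longrightarrow> failure_pattern_on {1..n} F"
  unfolding is_run_def by (elim conjE)

lemma is_run_stepD:
  assumes "is_run n P f A F V sc ev src ora" "sc t = Some p"
  shows "p \<in> {1..n}"
  using assms unfolding is_run_def by auto

lemma is_run_fairD:
  assumes "is_run n P f A F V sc ev src ora" "p \<in> Correct {1..n} F"
  shows "\<exists>t'\<ge>t. sc t' = Some p"
  using assms unfolding is_run_def by auto

lemma is_run_responseD:
  assumes "is_run n P f A F V sc ev src ora" "sc t = Some p" "ev t = Response k d"
  shows "d = ora k" and "\<exists>v. queried_before A V sc ev k p v t"
    and "(\<And>q v. queried_before A V sc ev k q v t \<Longrightarrow> V' q = v) \<Longrightarrow> d \<in> P F V'"
  using assms unfolding is_run_def by auto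

lemma is_run_liveD:
  assumes "is_run n P f A F V sc ev src ora" "n - f \<le> card (queriers A V sc ev k)"
    and "p \<in> queriers A V sc ev k" "p \<in> Correct {1..n} F"
  shows "\<exists>t. sc t = Some p \<and> ev t = Response k (ora k)"
  using assms unfolding is_run_def by auto

section \<open>Consensus from the wait-free consensus oracle\<close>

(* States 0 and 1 hold the input before it is submitted, 2 waits for the answer of
   consultation 0, and 3 and 4 have decided 0 and 1. *)
definition echo :: "(nat, nat) alg" where
  "echo = \<lparr>init = (\<lambda>p v. of_bool v),
     trans = (\<lambda>p s e.
        if s \<le> 1 then (2, [], Some (s = 1))
        else if s = 2 then
          (case e of Response k d \<Rightarrow> if k = 0 then (3 + of_bool d, [], None) else (2, [], None)
           | _ \<Rightarrow> (2, [], None))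
        else (s, [], None)),
     decision = (\<lambda>s. if 3 \<le> s then Some (s = 4) else None)\<rparr>"

lemma echo_init [simp]: "init echo p v = of_bool v"
  by (simp add: echo_def)

lemma echo_trans_input: "s \<le> 1 \<Longrightarrow> trans echo p s e = (2, [], Some (s = 1))"
  by (simp add: echo_def)

lemma echo_trans_waiting:
  "trans echo p 2 e = (case e of Response k d \<Rightarrow> if k = 0 then (3 + of_bool d, [], None) else (2, [], None)
                       | _ \<Rightarrow> (2, [], None))"
  by (simp add: echo_def)

lemma echo_trans_decided: "3 \<le> s \<Longrightarrow> trans echo p s e = (s, [], None)"
  by (simp add: echo_def)

lemma echo_decision: "decision echo s = Some d \<longleftrightarrow> 3 \<le> s \<and> d = (s = 4)"
  by (auto simp: echo_def)

lemma echo_trans_ge2: "2 \<le> fst (trans echo p s e)"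
  by (auto simp: echo_def split: event.splits)

lemma echo_state_input:
  "state echo V sc ev t p \<le> 1 \<Longrightarrow> state echo V sc ev t p = of_bool (V p)"
proof (induction t)
  case (Suc t)
  then show ?case
    using echo_trans_ge2[of p "state echo V sc ev t p" "ev t"] by (auto split: if_splits)
qed simp

lemma echo_state_initial:
  "(\<And>s. s < t \<Longrightarrow> sc s \<noteq> Some p) \<Longrightarrow> state echo V sc ev t p = of_bool (V p)"
  by (induction t) auto

lemma echo_state_waiting:
  assumes "2 \<le> state echo V sc ev t p" "t \<le> t'"
  shows "2 \<le> state echo V sc ev t' p"
  using assms(2) by (induction t' rule: dec_induct) (use assms(1) echo_trans_ge2 in auto)

lemma echo_state_decided:
  assumes "3 \<le> state echo V sc ev t p" "t \<le> t'"
  shows "state echo V sc ev t' p = state echo V sc ev t p"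
  using assms(2) by (induction t' rule: dec_induct) (use assms(1) echo_trans_decided in auto)

lemma echo_query:
  "sc s = Some p \<Longrightarrow>
   query echo V sc ev s = (if state echo V sc ev s p \<le> 1 then Some (V p) else None)"
  using echo_state_input[of V sc ev s p]
  by (cases "V p") (auto simp: query_step echo_def split: event.splits)

lemma echo_decision_response:
  "decision echo (state echo V sc ev t p) = Some d \<Longrightarrow> \<exists>t'<t. sc t' = Some p \<and> ev t' = Response 0 d"
proof (induction t)
  case 0
  then show ?case by (cases "V p") (simp_all add: echo_decision)
next
  case (Suc t)
  show ?case
  proof (cases "sc t = Some p \<and> state echo V sc ev t p = 2")
    case True
    then show ?thesis
      using Suc.prems by (auto simp: echo_trans_waiting echo_decision split: event.splits if_splits)
  next
    case False
    then consider "sc t \<noteq> Some p" | "sc t = Some p" "state echo V sc ev t p \<le> 1"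
      | "sc t = Some p" "3 \<le> state echo V sc ev t p"
      by linarith
    then have "state echo V sc ev (Suc t) p = state echo V sc ev t p"
      using Suc.prems by cases (auto simp: echo_trans_input echo_trans_decided echo_decision)
    then show ?thesis using Suc by (metis less_SucI)
  qed
qed

lemma echo_decided: "decision echo s \<noteq> None \<longleftrightarrow> 3 \<le> s"
  by (simp add: echo_def)

lemma echo_query_input: "sc s = Some p \<Longrightarrow> query echo V sc ev s = Some v \<Longrightarrow> v = V p"
  by (simp add: echo_query split: if_splits)

lemma echo_response:
  assumes run: "is_run n (ConsP n) f echo F V sc ev src ora" and "sc t = Some p" "ev t = Response k d"
  shows "d = ora k \<and> d \<in> ConsP n F V"
proof
  show "d = ora k" using is_run_responseD(1)[OF assms] .
  show "d \<in> ConsP n F V"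
  proof (rule is_run_responseD(3)[OF assms])
    fix q v assume "queried_before echo V sc ev k q v t"
    then show "V q = v" unfolding queried_before_def using echo_query_input by metis
  qed
qed

lemma echo_first_query:
  assumes run: "is_run n (ConsP n) f echo F V sc ev src ora" and p: "p \<in> Correct {1..n} F"
  shows "p \<in> queriers echo V sc ev 0"
proof -
  have ex: "\<exists>s. sc s = Some p" using is_run_fairD[OF run p] by blast
  define s0 where "s0 = (LEAST s. sc s = Some p)"
  have s0: "sc s0 = Some p" unfolding s0_def using LeastI_ex[OF ex] .
  have before: "sc s \<noteq> Some p" if "s < s0" for s using not_less_Least that unfolding s0_def by blast
  then have "query echo V sc ev s0 = Some (V p)"
    using s0 by (simp add: echo_query echo_state_initial)
  moreover have "qindex echo V sc ev p s0 = 0" unfolding qindex_def using before by auto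
  ultimately show ?thesis unfolding queriers_def using s0 by blast
qed

lemma echo_terminates:
  assumes run: "is_run n (ConsP n) f' echo F V sc ev src ora"
    and "card (Faulty F) \<le> f" "f \<le> f'" and p: "p \<in> Correct {1..n} F"
  shows "\<exists>t. decision echo (state echo V sc ev t p) \<noteq> None"
proof -
  have "Correct {1..n} F \<subseteq> queriers echo V sc ev 0"
    using echo_first_query[OF run] by blast
  moreover have "queriers echo V sc ev 0 \<subseteq> {1..n}"
    unfolding queriers_def using is_run_stepD[OF run] by blast
  ultimately have "card (Correct {1..n} F) \<le> card (queriers echo V sc ev 0)"
    by (meson card_mono finite_atLeastAtMost finite_subset)
  then have "n - f' \<le> card (queriers echo V sc ev 0)"
    using card_Correct[OF is_run_failure_pattern[OF run]] assms(2,3) by linarith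
  then obtain t where t: "sc t = Some p" "ev t = Response 0 (ora 0)"
    using is_run_liveD[OF run _ echo_first_query[OF run p] p] by blast
  obtain s v where s: "s < t" "sc s = Some p" "query echo V sc ev s = Some v"
    using is_run_responseD(2)[OF run t] unfolding queried_before_def by blast
  then have "state echo V sc ev (Suc s) p = 2"
    by (simp add: echo_query echo_trans_input split: if_splits)
  then have waiting: "2 \<le> state echo V sc ev t p"
    using echo_state_waiting[of V sc ev "Suc s" p t] s(1) by simp
  show ?thesis
  proof (cases "state echo V sc ev t p = 2")
    case True
    then have "3 \<le> state echo V sc ev (Suc t) p" using t by (simp add: echo_trans_waiting)
    then show ?thesis using echo_decided by blast
  next
    case False
    then have "3 \<le> state echo V sc ev t p" using waiting by linarith
    then show ?thesis using echo_decided by blast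
  qed
qed

lemma echo_solves_Cons:
  assumes "f \<le> f'"
  shows "solves_with echo (ConsTask n f) (ConsTask n f')"
  unfolding solves_with_def ConsTask_def Let_def task.simps
proof (intro allI impI conjI ballI)
  fix F V sc ev src ora
  assume "is_run n (ConsP n) f' echo F V sc ev src ora \<and> card (Faulty F) \<le> f"
  then have run: "is_run n (ConsP n) f' echo F V sc ev src ora" and faulty: "card (Faulty F) \<le> f"
    by blast+
  have decided_ora: "d = ora 0 \<and> d \<in> ConsP n F V"
    if "decision echo (state echo V sc ev t p) = Some d" for t p d
    using echo_decision_response[OF that] echo_response[OF run] by blast
  show "\<exists>t. decision echo (state echo V sc ev t p) \<noteq> None" if "p \<in> Correct {1..n} F" for p
    using echo_terminates[OF run faulty assms that] .
  show "decision echo (state echo V sc ev t' p) = Some d"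
    if "decision echo (state echo V sc ev t p) = Some d \<and> t \<le> t'" for p t t' d
    using that echo_state_decided[of V sc ev t p t'] by (simp add: echo_decision)
  show "d = d'" if "decision echo (state echo V sc ev t p) = Some d
      \<and> decision echo (state echo V sc ev t' q) = Some d'" for p q t t' d d'
    using that decided_ora by metis
  show "d \<in> ConsP n F V" if "decision echo (state echo V sc ev t p) = Some d" for p t d
    using that decided_ora by blast
qed

lemma C_reducible_Cons_Cons:
  "f \<le> f' \<Longrightarrow> C_reducible TYPE(nat) TYPE(nat) (ConsTask n f) (ConsTask n f')"
  unfolding C_reducible_def using echo_solves_Cons by (auto simp: ConsTask_def)

section \<open>An adversary for runs with oracle access\<close>

type_synonym item = "nat \<times> nat"

type_synonym 'm delivery_schedule = "nat \<Rightarrow> (item \<times> 'm event) option"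

definition event_of :: "'m delivery_schedule \<Rightarrow> nat \<Rightarrow> 'm event" where
  "event_of J t = (case J t of None \<Rightarrow> NoEvent | Some (_, e) \<Rightarrow> e)"

(* The adversary delivers items: (s, 0) is the oracle response to the query issued at time s,
   (s, Suc i) the i-th message sent at time s. Until the run is opened, a process only receives
   messages it sent itself. Each step delivers the lexicographically least pending item to the
   scheduled process, which makes delivery fair. *)
locale adversary =
  fixes A :: "('s, 'm) alg" and V :: "nat \<Rightarrow> bool" and sc :: "nat \<Rightarrow> nat option"
    and opened :: "nat \<Rightarrow> bool"
begin

definition addressed :: "'m delivery_schedule \<Rightarrow> nat \<Rightarrow> nat \<Rightarrow> item \<Rightarrow> bool"
  where
  "addressed J t p x \<longleftrightarrow> fst x < t \<and> (\<exists>q. sc (fst x) = Some q \<and>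
     (snd x = 0 \<and> q = p \<and> query A V sc (event_of J) (fst x) \<noteq> None
      \<or> 0 < snd x \<and> snd x - 1 < length (sent A V sc (event_of J) (fst x))
        \<and> fst (sent A V sc (event_of J) (fst x) ! (snd x - 1)) = p))"

definition deliverable :: "nat \<Rightarrow> item \<Rightarrow> bool" where
  "deliverable t x \<longleftrightarrow> opened t \<or> (0 < snd x \<and> sc (fst x) = sc t)"

definition pending :: "'m delivery_schedule \<Rightarrow> nat \<Rightarrow> nat \<Rightarrow> item \<Rightarrow> bool"
  where
  "pending J t p x \<longleftrightarrow>
     addressed J t p x \<and> deliverable t x \<and> (\<forall>t'<t. map_option fst (J t') \<noteq> Some x)"

definition delivery_event :: "'m delivery_schedule \<Rightarrow> nat \<Rightarrow> item \<Rightarrow> 'm event"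
  where
  "delivery_event J p x =
     (if snd x = 0
      then Response (qindex A V sc (event_of J) p (fst x)) (the (query A V sc (event_of J) (fst x)))
      else Receive (the (sc (fst x))) (snd (sent A V sc (event_of J) (fst x) ! (snd x - 1))))"

definition pick :: "'m delivery_schedule \<Rightarrow> nat \<Rightarrow> (item \<times> 'm event) option"
  where
  "pick J t = (case sc t of None \<Rightarrow> None | Some p \<Rightarrow>
     if \<exists>x. pending J t p x
     then let x = (LEAST x. pending J t p x) in Some (x, delivery_event J p x)
     else None)"

(* pick J t only inspects J below t, so deliveries is a fixpoint of pick. *)
primrec deliveries_before :: "nat \<Rightarrow> 'm delivery_schedule" where
  "deliveries_before 0 = (\<lambda>_. None)"
| "deliveries_before (Suc t) = (deliveries_before t)(t := pick (deliveries_before t) t)"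

definition deliveries :: "'m delivery_schedule" where
  "deliveries t = deliveries_before (Suc t) t"

abbreviation ev :: "nat \<Rightarrow> 'm event" where
  "ev \<equiv> event_of deliveries"

definition src :: "nat \<Rightarrow> nat \<times> nat" where
  "src t = (case deliveries t of None \<Rightarrow> (0, 0) | Some (x, _) \<Rightarrow> (fst x, snd x - 1))"

(* Oracle responses will only be delivered to p0, so answering every consultation with the
   value p0 submitted to it is valid for consensus. *)
definition oracle_answer :: "nat \<Rightarrow> nat \<Rightarrow> bool" where
  "oracle_answer p0 k =
     (SOME v. \<exists>s. sc s = Some p0 \<and> query A V sc ev s = Some v \<and> qindex A V sc ev p0 s = k)"

lemma deliveries_before_eq: "s < t \<Longrightarrow> deliveries_before t s = deliveries s"
  unfolding deliveries_def by (induction t) (auto simp: less_Suc_eq)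

lemma pending_cong:
  assumes "\<forall>s<t. J s = J' s"
  shows "pending J t p x = pending J' t p x"
proof -
  have "sent A V sc (event_of J) (fst x) = sent A V sc (event_of J') (fst x)"
    and "query A V sc (event_of J) (fst x) = query A V sc (event_of J') (fst x)" if "fst x < t"
    using that assms by (auto simp: event_of_def intro!: sent_cong query_cong)
  then have "addressed J t p x = addressed J' t p x"
    unfolding addressed_def by (cases "fst x < t") simp_all
  then show ?thesis unfolding pending_def using assms by auto
qed

lemma delivery_event_cong:
  assumes "\<forall>s<t. J s = J' s" "fst x < t"
  shows "delivery_event J p x = delivery_event J' p x"
proof -
  have events: "\<forall>s\<le>fst x. event_of J s = event_of J' s"
    using assms by (simp add: event_of_def)
  then have "\<forall>s<fst x. event_of J s = event_of J' s" by simp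
  then show ?thesis
    using sent_cong[OF events] query_cong[OF events] qindex_cong
    unfolding delivery_event_def by metis
qed

lemma pick_cong:
  assumes "\<forall>s<t. J s = J' s"
  shows "pick J t = pick J' t"
proof (cases "sc t")
  case (Some p)
  have same: "pending J t p = pending J' t p"
    using pending_cong[OF assms] by blast
  have "fst (LEAST x. pending J t p x) < t" if "\<exists>x. pending J t p x"
    using LeastI_ex[OF that] unfolding pending_def addressed_def by blast
  then show ?thesis
    using Some same delivery_event_cong[OF assms] unfolding pick_def Let_def by auto
qed (simp add: pick_def)

lemma deliveries_pick: "deliveries t = pick deliveries t"
proof -
  have "deliveries t = pick (deliveries_before t) t" by (simp add: deliveries_def)
  also have "\<dots> = pick deliveries t" by (rule pick_cong) (simp add: deliveries_before_eq)
  finally show ?thesis .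
qed

lemma deliveries_SomeD:
  "deliveries t = Some (x, e) \<Longrightarrow>
   \<exists>p. sc t = Some p \<and> pending deliveries t p x \<and> e = delivery_event deliveries p x"
  using deliveries_pick[of t] unfolding pick_def Let_def
  by (auto split: option.splits if_splits intro: LeastI_ex)

lemma deliveries_least:
  assumes "sc t = Some p" "pending deliveries t p x"
  shows "\<exists>y\<le>x. deliveries t = Some (y, delivery_event deliveries p y) \<and> pending deliveries t p y"
proof -
  let ?y = "LEAST y. pending deliveries t p y"
  have "\<exists>y. pending deliveries t p y" using assms(2) by blast
  then have "deliveries t = Some (?y, delivery_event deliveries p ?y)"
    using deliveries_pick[of t] assms(1) unfolding pick_def Let_def by simp
  moreover have "?y \<le> x" "pending deliveries t p ?y"
    using assms(2) by (rule Least_le, rule LeastI)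
  ultimately show ?thesis by blast
qed

lemma addressed_unique: "addressed J t p x \<Longrightarrow> addressed J t' p' x \<Longrightarrow> p = p'"
  unfolding addressed_def by auto

lemma addressed_mono: "addressed J t p x \<Longrightarrow> fst x < t' \<Longrightarrow> addressed J t' p x"
  unfolding addressed_def by auto

lemma delivered_once:
  assumes "deliveries t = Some (x, e)" "deliveries t' = Some (x, e')"
  shows "t = t'"
proof -
  have False if "deliveries t = Some (x, e)" "deliveries t' = Some (x, e')" "t < t'" for t t' e e'
    using deliveries_SomeD[OF that(2)] that(1,3) unfolding pending_def by fastforce
  then show ?thesis using assms by (metis linorder_neqE_nat)
qed

lemma eventually_delivered:
  assumes steps: "\<forall>t. \<exists>t'\<ge>t. sc t' = Some p" and addr: "addressed deliveries (Suc (fst x)) p x"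
    and deliv: "\<forall>t\<ge>t0. sc t = Some p \<longrightarrow> deliverable t x"
  shows "\<exists>t. sc t = Some p \<and> deliveries t = Some (x, delivery_event deliveries p x)"
proof (rule ccontr)
  assume never: "\<not> ?thesis"
  have not_delivered: "map_option fst (deliveries t) \<noteq> Some x" for t
  proof
    assume "map_option fst (deliveries t) = Some x"
    then obtain e where dt: "deliveries t = Some (x, e)" by auto
    then obtain q where q: "sc t = Some q" "pending deliveries t q x" "e = delivery_event deliveries q x"
      using deliveries_SomeD by blast
    moreover have "q = p" using addressed_unique q(2) addr unfolding pending_def by blast
    ultimately show False using never dt by blast
  qed
  (* From some time on x stays pending, so every step of p delivers an item below x, and
     there are only finitely many candidates. *)
  define S where "S = {t. max t0 (Suc (fst x)) \<le> t \<and> sc t = Some p}"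
  define B where "B = (SIGMA s:{..fst x}. {..length (sent A V sc ev s)})"
  define g where "g t = fst (the (deliveries t))" for t
  have delivers_in_B: "g t \<in> B \<and> deliveries t = Some (g t, delivery_event deliveries p (g t))"
    if tS: "t \<in> S" for t
  proof -
    have "pending deliveries t p x"
      using tS deliv not_delivered addressed_mono[OF addr] unfolding S_def pending_def by auto
    then obtain y where y: "y \<le> x" "deliveries t = Some (y, delivery_event deliveries p y)"
      "pending deliveries t p y"
      using deliveries_least tS unfolding S_def by blast
    have "fst y \<le> fst x" using y(1) by (auto simp: less_eq_prod_def)
    moreover have "snd y \<le> length (sent A V sc ev (fst y))"
      using y(3) unfolding pending_def addressed_def by auto
    ultimately have "y \<in> B" unfolding B_def by (cases y) auto
    then show ?thesis using y(2) by (simp add: g_def)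
  qed
  have "inj_on g S"
    by (rule inj_onI) (metis delivers_in_B delivered_once)
  moreover have "g ` S \<subseteq> B" using delivers_in_B by blast
  moreover have "finite B" unfolding B_def by simp
  ultimately have "finite S" by (rule inj_on_finite)
  then obtain m where "\<forall>t\<in>S. t \<le> m" using finite_nat_set_iff_bounded_le by blast
  moreover obtain t where "max (max t0 (Suc (fst x))) (Suc m) \<le> t" "sc t = Some p"
    using steps by blast
  ultimately show False unfolding S_def by fastforce
qed

lemma ev_ReceiveD:
  assumes "sc t = Some p" "ev t = Receive q m"
  obtains x where "deliveries t = Some (x, Receive q m)" "pending deliveries t p x" "0 < snd x"
    "sc (fst x) = Some q" "snd (sent A V sc ev (fst x) ! (snd x - 1)) = m"
proof -
  obtain x e where dt: "deliveries t = Some (x, e)"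
    using assms(2) by (auto simp: event_of_def split: option.splits)
  then have e: "e = Receive q m" using assms(2) by (simp add: event_of_def)
  obtain p' where p': "sc t = Some p'" "pending deliveries t p' x" "e = delivery_event deliveries p' x"
    using deliveries_SomeD[OF dt] by blast
  then have x: "0 < snd x" using e unfolding delivery_event_def by (auto split: if_splits)
  then obtain q' where "sc (fst x) = Some q'" using p'(2) unfolding pending_def addressed_def by auto
  then show ?thesis using that dt e p' x assms(1) unfolding delivery_event_def by auto
qed

lemma ev_ResponseD:
  assumes "sc t = Some p" "ev t = Response k d"
  obtains x where "deliveries t = Some (x, Response k d)" "pending deliveries t p x" "snd x = 0"
    "sc (fst x) = Some p" "query A V sc ev (fst x) = Some d" "qindex A V sc ev p (fst x) = k"
proof -
  obtain x e where dt: "deliveries t = Some (x, e)"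
    using assms(2) by (auto simp: event_of_def split: option.splits)
  then have e: "e = Response k d" using assms(2) by (simp add: event_of_def)
  obtain p' where p': "sc t = Some p'" "pending deliveries t p' x" "e = delivery_event deliveries p' x"
    using deliveries_SomeD[OF dt] by blast
  then have x: "snd x = 0" using e unfolding delivery_event_def by (auto split: if_splits)
  then have "sc (fst x) = Some p" "query A V sc ev (fst x) \<noteq> None"
    using p' assms(1) unfolding pending_def addressed_def by auto
  then show ?thesis using that dt e p' x assms(1) unfolding delivery_event_def by auto
qed

lemma oracle_answer_eq:
  assumes "sc s = Some p0" "query A V sc ev s = Some v" "qindex A V sc ev p0 s = k"
  shows "oracle_answer p0 k = v"
  unfolding oracle_answer_def
proof (rule someI2)
  show "\<exists>s. sc s = Some p0 \<and> query A V sc ev s = Some v \<and> qindex A V sc ev p0 s = k"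
    using assms by blast
next
  fix v' assume "\<exists>s. sc s = Some p0 \<and> query A V sc ev s = Some v' \<and> qindex A V sc ev p0 s = k"
  then obtain s' where s': "sc s' = Some p0" "query A V sc ev s' = Some v'" "qindex A V sc ev p0 s' = k"
    by blast
  then have "s' = s" using qindex_inj[of sc s' p0 A V ev s] assms by auto
  then show "v' = v" using s' assms by simp
qed

lemma received_was_sent:
  assumes "sc t = Some p" "ev t = Receive q m"
  shows "fst (src t) < t \<and> sc (fst (src t)) = Some q
    \<and> snd (src t) < length (sent A V sc ev (fst (src t)))
    \<and> sent A V sc ev (fst (src t)) ! snd (src t) = (p, m)"
proof -
  obtain x where x: "deliveries t = Some (x, Receive q m)" "pending deliveries t p x" "0 < snd x"
    "sc (fst x) = Some q" "snd (sent A V sc ev (fst x) ! (snd x - 1)) = m"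
    by (rule ev_ReceiveD[OF assms])
  have "fst x < t" "snd x - 1 < length (sent A V sc ev (fst x))"
    "fst (sent A V sc ev (fst x) ! (snd x - 1)) = p"
    using x(2,3) unfolding pending_def addressed_def by auto
  then show ?thesis using x(1,4,5) by (simp add: src_def prod_eq_iff)
qed

lemma received_once:
  assumes "sc t = Some p" "ev t = Receive q m" "sc t' = Some p'" "ev t' = Receive q' m'"
    and "src t = src t'"
  shows "t = t'"
proof -
  obtain x where x: "deliveries t = Some (x, Receive q m)" "0 < snd x"
    using ev_ReceiveD[OF assms(1,2)] by metis
  obtain x' where x': "deliveries t' = Some (x', Receive q' m')" "0 < snd x'"
    using ev_ReceiveD[OF assms(3,4)] by metis
  have "fst x = fst x'" "snd x - 1 = snd x' - 1" using assms(5) x(1) x'(1) by (simp_all add: src_def)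
  then have "x = x'" using x(2) x'(2) by (intro prod_eqI) arith+
  then show ?thesis using delivered_once x(1) x'(1) by blast
qed

lemma sent_is_received:
  assumes steps: "\<forall>t. \<exists>t'\<ge>t. sc t' = Some p"
    and eventually: "\<exists>t0. \<forall>t\<ge>t0. sc t = Some p \<longrightarrow> opened t \<or> sc s = Some p"
    and "sc s = Some q" "i < length (sent A V sc ev s)" "sent A V sc ev s ! i = (p, m)"
  shows "\<exists>t. sc t = Some p \<and> ev t = Receive q m \<and> src t = (s, i)"
proof -
  obtain t0 where "\<forall>t\<ge>t0. sc t = Some p \<longrightarrow> opened t \<or> sc s = Some p"
    using eventually by blast
  then have "\<forall>t\<ge>t0. sc t = Some p \<longrightarrow> deliverable t (s, Suc i)"
    by (auto simp: deliverable_def)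
  moreover have "addressed deliveries (Suc s) p (s, Suc i)"
    using assms(3-) by (simp add: addressed_def)
  ultimately obtain t where
    t: "sc t = Some p" "deliveries t = Some ((s, Suc i), delivery_event deliveries p (s, Suc i))"
    using eventually_delivered[OF steps] by fastforce
  moreover have "delivery_event deliveries p (s, Suc i) = Receive q m"
    using assms(3,5) by (simp add: delivery_event_def)
  ultimately show ?thesis by (intro exI[of _ t]) (simp add: event_of_def src_def)
qed

lemma response_valid:
  assumes only: "\<forall>t q. opened t \<and> sc t = Some q \<longrightarrow> q = p0"
    and "sc t = Some p" "ev t = Response k d" "p \<in> {1..n}"
  shows "d = oracle_answer p0 k \<and> (\<exists>v. queried_before A V sc ev k p v t)
    \<and> (\<forall>V'. (\<forall>q v. queried_before A V sc ev k q v t \<longrightarrow> V' q = v) \<longrightarrow> d \<in> ConsP n F V')"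
proof -
  obtain x where x: "deliveries t = Some (x, Response k d)" "pending deliveries t p x" "snd x = 0"
    "sc (fst x) = Some p" "query A V sc ev (fst x) = Some d" "qindex A V sc ev p (fst x) = k"
    by (rule ev_ResponseD[OF assms(2,3)])
  have "opened t" using x(2,3) by (simp add: pending_def deliverable_def)
  then have "p = p0" using only assms(2) by blast
  have "queried_before A V sc ev k p d t"
    using x(2,4-) unfolding queried_before_def pending_def addressed_def by blast
  then show ?thesis
    using oracle_answer_eq x(4-) \<open>p = p0\<close> ConsP_input[OF assms(4)] by blast
qed

lemma response_once:
  assumes "sc t = Some p" "sc t' = Some p" "ev t = Response k d" "ev t' = Response k d'"
  shows "t = t'"
proof -
  obtain x where x: "deliveries t = Some (x, Response k d)" "snd x = 0" "sc (fst x) = Some p"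
    "query A V sc ev (fst x) = Some d" "qindex A V sc ev p (fst x) = k"
    using ev_ResponseD[OF assms(1,3)] by metis
  obtain x' where x': "deliveries t' = Some (x', Response k d')" "snd x' = 0" "sc (fst x') = Some p"
    "query A V sc ev (fst x') = Some d'" "qindex A V sc ev p (fst x') = k"
    using ev_ResponseD[OF assms(2,4)] by metis
  have "fst x = fst x'" using qindex_inj[of sc "fst x" p A V ev "fst x'"] x x' by simp
  then have "x = x'" "d = d'" using x x' by (auto simp: prod_eq_iff)
  then show ?thesis using delivered_once x(1) x'(1) by blast
qed

lemma response_delivered:
  assumes steps: "\<forall>t. \<exists>t'\<ge>t. sc t' = Some p" and opened: "\<exists>t0. \<forall>t\<ge>t0. opened t"
    and only: "\<forall>t q. opened t \<and> sc t = Some q \<longrightarrow> q = p0"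
    and "p \<in> queriers A V sc ev k"
  shows "\<exists>t. sc t = Some p \<and> ev t = Response k (oracle_answer p0 k)"
proof -
  obtain s v where s: "sc s = Some p" "query A V sc ev s = Some v" "qindex A V sc ev p s = k"
    using assms(4) unfolding queriers_def by blast
  obtain t0 where t0: "\<forall>t\<ge>t0. opened t" using opened by blast
  have "addressed deliveries (Suc s) p (s, 0)" using s by (simp add: addressed_def)
  moreover have "\<forall>t\<ge>t0. sc t = Some p \<longrightarrow> deliverable t (s, 0)"
    using t0 by (simp add: deliverable_def)
  ultimately obtain t where t: "sc t = Some p" "deliveries t = Some ((s, 0), delivery_event deliveries p (s, 0))"
    using eventually_delivered[OF steps] by fastforce
  have "p = p0" using steps t0 only by blast
  then have "delivery_event deliveries p (s, 0) = Response k (oracle_answer p0 k)"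
    using s oracle_answer_eq by (simp add: delivery_event_def)
  then show ?thesis using t by (auto simp: event_of_def)
qed

lemma is_run_adversary:
  assumes "failure_pattern_on {1..n} F"
    and "\<And>t p. sc t = Some p \<Longrightarrow> p \<in> {1..n} \<and> p \<notin> F t"
    and steps: "\<And>p t. p \<in> Correct {1..n} F \<Longrightarrow> \<exists>t'\<ge>t. sc t' = Some p"
    and messages: "\<And>p s. p \<in> Correct {1..n} F \<Longrightarrow> sc s \<noteq> None \<Longrightarrow>
       \<exists>t0. \<forall>t\<ge>t0. sc t = Some p \<longrightarrow> opened t \<or> sc s = Some p"
    and live: "\<And>k. n - f \<le> card (queriers A V sc ev k) \<Longrightarrow> \<exists>t0. \<forall>t\<ge>t0. opened t"
    and only: "\<And>t p. opened t \<Longrightarrow> sc t = Some p \<Longrightarrow> p = p0"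
  shows "is_run n (ConsP n) f A F V sc ev src (oracle_answer p0)"
proof -
  have only_p0: "\<forall>t p. opened t \<and> sc t = Some p \<longrightarrow> p = p0" using only by blast
  show ?thesis
    unfolding is_run_def
  proof (intro conjI, goal_cases)
    case 1 show ?case by fact
  next
    case 2 show ?case using assms(2) by blast
  next
    case 3 show ?case using steps by blast
  next
    case 4 show ?case using received_was_sent by blast
  next
    case 5 show ?case using received_once by blast
  next
    case 6 show ?case using sent_is_received steps messages by (metis option.distinct(1))
  next
    case 7 show ?case using response_valid[OF only_p0] assms(2) by blast
  next
    case 8 show ?case using response_once by blast
  next
    case 9 show ?case using response_delivered[OF _ live only_p0] steps by blast
  qed
qed

lemma pending_before_opened:
  assumes "sc t = Some p" "\<not> opened t"
  shows "pending deliveries t p x \<longleftrightarrow> fst x < t \<and> sc (fst x) = Some p \<and> 0 < snd x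
     \<and> snd x - 1 < length (sent A V sc ev (fst x)) \<and> fst (sent A V sc ev (fst x) ! (snd x - 1)) = p
     \<and> (\<forall>t'<t. sc t' = Some p \<longrightarrow> map_option fst (deliveries t') \<noteq> Some x)"
    (is "_ \<longleftrightarrow> ?self_message")
proof
  assume "pending deliveries t p x"
  then show ?self_message
    using assms unfolding pending_def addressed_def deliverable_def by auto
next
  assume self: ?self_message
  then have addr: "addressed deliveries t p x" unfolding addressed_def by auto
  have "map_option fst (deliveries t') \<noteq> Some x" if "t' < t" for t'
  proof
    assume "map_option fst (deliveries t') = Some x"
    then obtain e where "deliveries t' = Some (x, e)" by auto
    then obtain p' where "sc t' = Some p'" "pending deliveries t' p' x"
      using deliveries_SomeD by blast
    moreover have "p' = p" using addressed_unique addr \<open>pending deliveries t' p' x\<close>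
      unfolding pending_def by blast
    ultimately show False using self that \<open>map_option fst (deliveries t') = Some x\<close> by blast
  qed
  then show "pending deliveries t p x"
    using addr self assms unfolding pending_def deliverable_def by auto
qed

end

locale adversary_pair = r: adversary A V sc opened + r': adversary A V' sc' opened'
  for A :: "('s, 'm) alg" and V sc opened V' sc' opened'
begin

(* Before the runs are opened, p only receives its own messages, so what it receives is
   determined by its own history. *)
lemma deliveries_agree:
  assumes sched: "\<forall>s\<le>t. sc s = Some p \<longleftrightarrow> sc' s = Some p"
    and states: "\<forall>s\<le>t. state A V sc r.ev s p = state A V' sc' r'.ev s p"
    and past: "\<forall>s<t. sc s = Some p \<longrightarrow> r.deliveries s = r'.deliveries s"
    and now: "sc t = Some p" "\<not> opened t" "\<not> opened' t"
  shows "r.deliveries t = r'.deliveries t"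
proof -
  have now': "sc' t = Some p" using sched now(1) by blast
  have sent_eq: "sent A V sc r.ev s = sent A V' sc' r'.ev s" if "s < t" "sc s = Some p" for s
  proof -
    have "r.ev s = r'.ev s" using past that by (simp add: event_of_def)
    moreover have "sc' s = Some p" using sched that by auto
    ultimately show ?thesis
      using that states sent_step[of sc s p A V r.ev] sent_step[of sc' s p A V' r'.ev] by simp
  qed
  have same_pending: "r.pending r.deliveries t p = r'.pending r'.deliveries t p"
  proof
    fix x
    have "\<forall>t'<t. sc t' = Some p \<longleftrightarrow> sc' t' = Some p" using sched by auto
    then show "r.pending r.deliveries t p x = r'.pending r'.deliveries t p x"
      unfolding r.pending_before_opened[OF now(1,2)] r'.pending_before_opened[OF now' now(3)]
      using past sent_eq by (metis (no_types, lifting))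
  qed
  have same_event: "r.delivery_event r.deliveries p y = r'.delivery_event r'.deliveries p y"
    if "r.pending r.deliveries t p y" for y
  proof -
    have y: "fst y < t" "sc (fst y) = Some p" "0 < snd y"
      using that unfolding r.pending_before_opened[OF now(1,2)] by auto
    then have "sc' (fst y) = Some p" using sched by auto
    then show ?thesis
      unfolding r.delivery_event_def r'.delivery_event_def using y sent_eq by simp
  qed
  show ?thesis
  proof (cases "\<exists>x. r.pending r.deliveries t p x")
    case True
    then have "r.pending r.deliveries t p (LEAST x. r.pending r.deliveries t p x)"
      by (rule LeastI_ex)
    then show ?thesis
      using r.deliveries_pick[of t] r'.deliveries_pick[of t] now(1) now' same_pending True
        same_event
      unfolding r.pick_def r'.pick_def Let_def by simp
  next
    case False
    then show ?thesis
      using r.deliveries_pick[of t] r'.deliveries_pick[of t] now(1) now' same_pending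
      unfolding r.pick_def r'.pick_def by simp
  qed
qed

lemma state_indistinguishable:
  assumes "V p = V' p" and sched: "\<forall>t<T. sc t = Some p \<longleftrightarrow> sc' t = Some p"
    and closed: "\<forall>t<T. sc t = Some p \<longrightarrow> \<not> opened t \<and> \<not> opened' t"
  shows "state A V sc r.ev T p = state A V' sc' r'.ev T p"
proof -
  have "t \<le> T \<longrightarrow> (\<forall>s\<le>t. state A V sc r.ev s p = state A V' sc' r'.ev s p)
      \<and> (\<forall>s<t. sc s = Some p \<longrightarrow> r.deliveries s = r'.deliveries s)" for t
  proof (induction t)
    case 0
    show ?case using assms(1) by simp
  next
    case (Suc t)
    show ?case
    proof
      assume "Suc t \<le> T"
      with Suc.IH have states: "\<forall>s\<le>t. state A V sc r.ev s p = state A V' sc' r'.ev s p"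
        and past: "\<forall>s<t. sc s = Some p \<longrightarrow> r.deliveries s = r'.deliveries s"
        by auto
      have sched_t: "\<forall>s\<le>t. sc s = Some p \<longleftrightarrow> sc' s = Some p"
        using sched \<open>Suc t \<le> T\<close> by auto
      have now: "r.deliveries t = r'.deliveries t" if "sc t = Some p"
        using deliveries_agree[OF sched_t states past that] closed that \<open>Suc t \<le> T\<close> by auto
      have "state A V sc r.ev (Suc t) p = state A V' sc' r'.ev (Suc t) p"
        using now states sched_t by (auto simp: event_of_def)
      then show "(\<forall>s\<le>Suc t. state A V sc r.ev s p = state A V' sc' r'.ev s p)
          \<and> (\<forall>s<Suc t. sc s = Some p \<longrightarrow> r.deliveries s = r'.deliveries s)"
        using states past now by (auto simp: le_Suc_eq less_Suc_eq)
    qed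
  qed
  then show ?thesis by blast
qed

end

section \<open>Irreducibility of wait-free consensus\<close>

definition solo :: "nat \<Rightarrow> nat \<Rightarrow> nat \<Rightarrow> nat option" where
  "solo p t0 t = (if t < t0 then None else Some p)"

lemma solo_run_decides_input:
  assumes sol: "solves_with A (ConsTask n f') (ConsTask n f)"
    and "n - 1 \<le> f'" "f + 2 \<le> n" and p: "p \<in> {1..n}"
  shows "\<exists>T. decision A (state A (\<lambda>_. b) (solo p t0)
           (event_of (adversary.deliveries A (\<lambda>_. b) (solo p t0) (\<lambda>_. False))) T p) = Some b"
proof -
  interpret adversary A "\<lambda>_. b" "solo p t0" "\<lambda>_. False" .
  define F :: failure_pattern where "F = (\<lambda>_. {1..n} - {p})"
  have faulty: "Faulty F = {1..n} - {p}" by (simp add: Faulty_def F_def)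
  have correct: "Correct {1..n} F = {p}" using p by (auto simp: Correct_def faulty)
  have "is_run n (ConsP n) f A F (\<lambda>_. b) (solo p t0) ev src (oracle_answer p)"
  proof (rule is_run_adversary)
    show "failure_pattern_on {1..n} F" by (simp add: failure_pattern_on_def F_def mono_def)
    show "solo p t0 t = Some q \<Longrightarrow> q \<in> {1..n} \<and> q \<notin> F t" for t q
      using p by (auto simp: solo_def F_def split: if_splits)
    show "\<exists>t'\<ge>t. solo p t0 t' = Some q" if "q \<in> Correct {1..n} F" for q t
      using that correct by (intro exI[of _ "t + t0"]) (simp add: solo_def)
    show "\<exists>t1. \<forall>t\<ge>t1. solo p t0 t = Some q \<longrightarrow> False \<or> solo p t0 s = Some q"
      if "solo p t0 s \<noteq> None" for q s
      using that by (auto simp: solo_def split: if_splits)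
    show "\<exists>t1. \<forall>t\<ge>t1. False" if "n - f \<le> card (queriers A (\<lambda>_. b) (solo p t0) ev k)" for k
    proof -
      have "queriers A (\<lambda>_. b) (solo p t0) ev k \<subseteq> {p}"
        unfolding queriers_def solo_def by (auto split: if_splits)
      then have "card (queriers A (\<lambda>_. b) (solo p t0) ev k) \<le> 1"
        using card_mono[of "{p}"] by fastforce
      then show ?thesis using that assms(3) by linarith
    qed
  qed simp
  moreover have "card (Faulty F) \<le> f'" using p assms(2) by (simp add: faulty)
  ultimately have decides: "\<exists>T. decision A (state A (\<lambda>_. b) (solo p t0) ev T p) \<noteq> None"
    and valid: "\<And>T d. decision A (state A (\<lambda>_. b) (solo p t0) ev T p) = Some d \<Longrightarrow> d \<in> {b}"
    using solves_with_ConsTaskD(1,3)[OF sol] correct p ConsP_const[of n F b] by auto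
  then show ?thesis by blast
qed


definition handover :: "nat \<Rightarrow> nat \<Rightarrow> nat option" where
  "handover T t = Some (if t < T then 1 else 2)"

definition handover_failures :: "nat \<Rightarrow> nat \<Rightarrow> failure_pattern" where
  "handover_failures n T t = {1..n} - {2} - (if t < T then {1} else {})"

lemma Faulty_handover_failures: "Faulty (handover_failures n T) = {1..n} - {2}"
proof
  show "Faulty (handover_failures n T) \<subseteq> {1..n} - {2}"
    unfolding Faulty_def handover_failures_def by auto
  show "{1..n} - {2} \<subseteq> Faulty (handover_failures n T)"
    unfolding Faulty_def handover_failures_def by (intro UN_upper[of T, THEN subset_trans]) auto
qed

lemma handover_is_run:
  assumes "2 \<le> n" "T \<le> T'"
  shows "is_run n (ConsP n) f A (handover_failures n T) V (handover T)
           (event_of (adversary.deliveries A V (handover T) (\<lambda>t. T' \<le> t)))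
           (adversary.src A V (handover T) (\<lambda>t. T' \<le> t))
           (adversary.oracle_answer A V (handover T) (\<lambda>t. T' \<le> t) 2)"
proof -
  interpret adversary A V "handover T" "\<lambda>t. T' \<le> t" .
  have correct: "Correct {1..n} (handover_failures n T) = {2}"
    using assms(1) by (auto simp: Correct_def Faulty_handover_failures)
  show ?thesis
  proof (rule is_run_adversary)
    show "failure_pattern_on {1..n} (handover_failures n T)"
      unfolding failure_pattern_on_def handover_failures_def mono_def by auto
    show "handover T t = Some p \<Longrightarrow> p \<in> {1..n} \<and> p \<notin> handover_failures n T t" for t p
      using assms(1) by (auto simp: handover_def handover_failures_def split: if_splits)
    show "\<exists>t'\<ge>t. handover T t' = Some p" if "p \<in> Correct {1..n} (handover_failures n T)" for p t
      using that correct by (intro exI[of _ "t + T"]) (simp add: handover_def)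
    show "\<exists>t0. \<forall>t\<ge>t0. handover T t = Some p \<longrightarrow> T' \<le> t \<or> handover T s = Some p" for p s
      by blast
    show "\<exists>t0. \<forall>t\<ge>t0. T' \<le> t" for k
      by blast
    show "T' \<le> t \<Longrightarrow> handover T t = Some p \<Longrightarrow> p = 2" for t p
      using assms(2) by (simp add: handover_def)
  qed
qed

lemma not_solves_wait_free_Cons:
  assumes "f + 2 \<le> n" "n - 1 \<le> f'"
  shows "\<not> solves_with A (ConsTask n f') (ConsTask n f)"
proof
  assume sol: "solves_with A (ConsTask n f') (ConsTask n f)"
  have procs: "1 \<in> {1..n}" "2 \<in> {1..n}" using assms(1) by auto
  let ?V1 = "\<lambda>_ :: nat. False" and ?V2 = "\<lambda>_ :: nat. True" and ?V = "\<lambda>q :: nat. q \<noteq> 1"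
  obtain T1 where T1: "decision A (state A ?V1 (solo 1 0)
      (event_of (adversary.deliveries A ?V1 (solo 1 0) (\<lambda>_. False))) T1 1) = Some False"
    using solo_run_decides_input[OF sol assms(2,1) procs(1)] by blast
  obtain T2 where T2: "decision A (state A ?V2 (solo 2 T1)
      (event_of (adversary.deliveries A ?V2 (solo 2 T1) (\<lambda>_. False))) T2 2) = Some True"
    using solo_run_decides_input[OF sol assms(2,1) procs(2)] by blast
  define opened where "opened t \<longleftrightarrow> T1 + T2 \<le> t" for t
  interpret run1: adversary_pair A ?V1 "solo 1 0" "\<lambda>_. False" ?V "handover T1" opened .
  interpret run2: adversary_pair A ?V2 "solo 2 T1" "\<lambda>_. False" ?V "handover T1" opened .
  have run: "is_run n (ConsP n) f A (handover_failures n T1) ?V (handover T1)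
      run1.r'.ev run1.r'.src (run1.r'.oracle_answer 2)"
    using handover_is_run[of n T1 "T1 + T2"] assms(1) unfolding opened_def by simp
  have faulty: "card (Faulty (handover_failures n T1)) \<le> f'"
    using assms(2) procs(2) by (simp add: Faulty_handover_failures)
  have "state A ?V1 (solo 1 0) run1.r.ev T1 1 = state A ?V (handover T1) run1.r'.ev T1 1"
    by (rule run1.state_indistinguishable) (auto simp: solo_def handover_def opened_def)
  then have "decision A (state A ?V (handover T1) run1.r'.ev T1 1) = Some False"
    using T1 by simp
  moreover have "state A ?V2 (solo 2 T1) run2.r.ev T2 2 = state A ?V (handover T1) run1.r'.ev T2 2"
    by (rule run2.state_indistinguishable) (auto simp: solo_def handover_def opened_def)
  then have "decision A (state A ?V (handover T1) run1.r'.ev T2 2) = Some True"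
    using T2 by simp
  ultimately show False
    using solves_with_ConsTaskD(2)[OF sol run faulty procs] by blast
qed

theorem mainTheorem15:
  fixes n f :: nat
  assumes "1 \<le> f" and "f + 2 \<le> n"
  shows "C_reducible TYPE(nat) TYPE(nat) (ConsTask n f) (ConsTask n (n - 1))
         \<and> \<not> C_reducible TYPE('s) TYPE('m) (ConsTask n (n - 1)) (ConsTask n f)"
proof
  show "C_reducible TYPE(nat) TYPE(nat) (ConsTask n f) (ConsTask n (n - 1))"
    using assms(2) by (intro C_reducible_Cons_Cons) linarith
  show "\<not> C_reducible TYPE('s) TYPE('m) (ConsTask n (n - 1)) (ConsTask n f)"
    using not_solves_wait_free_Cons[OF assms(2) order_refl] unfolding C_reducible_def by blast
qed

end
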